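(* Let $\mathcal M$ be an oriented matroid on $E$ and let $\mathcal S\subseteq 2^E$ be a maximal-by-size $\mathcal M$-separated collection. Then $\mathcal S$ is complete: for every circuit $Y=(Y^+,Y^-)$ of $\mathcal M$ there exists $S\in\mathcal S$ with either ($Y^+\subseteq S$ and $Y^-\cap S=\emptyset$) or ($Y^-\subseteq S$ and $Y^+\cap S=\emptyset$).
   Context: Oriented matroids are given by signed circuits $X=(X^+,X^-)$ on $E$. $I,J\subseteq E$ are $\mathcal M$-separated if no circuit $X$ satisfies $X^+\subseteq I\setminus J$, $X^-\subseteq J\setminus I$; a collection is $\mathcal M$-separated if pairwise so; maximal by size means of maximum cardinality among all $\mathcal M$-separated collections. *)

theory Defs
  imports Main
begin

text \<open>A signed set is a pair (X+, X-) of subsets of the ground set.\<close>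

type_synonym 'a signed_set = "'a set \<times> 'a set"

definition neg_sset :: "'a signed_set \<Rightarrow> 'a signed_set" where
  "neg_sset X = (snd X, fst X)"

definition supp :: "'a signed_set \<Rightarrow> 'a set" where
  "supp X = fst X \<union> snd X"

definition oriented_matroid :: "'a set \<Rightarrow> 'a signed_set set \<Rightarrow> bool" where
  "oriented_matroid E C \<longleftrightarrow>
     finite E \<and>
     (\<forall>X\<in>C. fst X \<inter> snd X = {} \<and> supp X \<subseteq> E) \<and>
     ({}, {}) \<notin> C \<and>
     (\<forall>X\<in>C. neg_sset X \<in> C) \<and>
     (\<forall>X\<in>C. \<forall>Y\<in>C. supp X \<subseteq> supp Y \<longrightarrow> X = Y \<or> X = neg_sset Y) \<and>
     (\<forall>X\<in>C. \<forall>Y\<in>C. \<forall>e. X \<noteq> neg_sset Y \<and> e \<in> fst X \<inter> snd Y \<longrightarrow>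
        (\<exists>Z\<in>C. fst Z \<subseteq> (fst X \<union> fst Y) - {e} \<and> snd Z \<subseteq> (snd X \<union> snd Y) - {e}))"

definition M_separated :: "'a signed_set set \<Rightarrow> 'a set \<Rightarrow> 'a set \<Rightarrow> bool" where
  "M_separated C I J \<longleftrightarrow> \<not> (\<exists>X\<in>C. fst X \<subseteq> I - J \<and> snd X \<subseteq> J - I)"

definition M_separated_collection :: "'a set \<Rightarrow> 'a signed_set set \<Rightarrow> 'a set set \<Rightarrow> bool" where
  "M_separated_collection E C S \<longleftrightarrow>
     S \<subseteq> Pow E \<and> (\<forall>I\<in>S. \<forall>J\<in>S. M_separated C I J)"

definition max_by_size_separated :: "'a set \<Rightarrow> 'a signed_set set \<Rightarrow> 'a set set \<Rightarrow> bool" where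
  "max_by_size_separated E C S \<longleftrightarrow>
     M_separated_collection E C S \<and>
     (\<forall>S'. M_separated_collection E C S' \<longrightarrow> card S' \<le> card S)"

end

theory Submission
  imports Defs
begin

text \<open>Fix an injective ranking \<open>r\<close> of \<open>E\<close> and let \<open>L\<close> be the family of all \<open>T \<subseteq> E\<close> such
  that every circuit conforming to \<open>T\<close> has a positive element ranked below all its negative
  elements; \<open>L\<close> is \<open>\<M>\<close>-separated. Let \<open>e\<close> be the element of largest rank. Any family \<open>S\<close>
  splits as \<open>|S| = |S \ e| + |S / e|\<close>, where \<open>S \ e\<close> consists of the sets \<open>T - {e}\<close> and \<open>S / e\<close> of
  the \<open>T\<close> with \<open>e \<notin> T\<close> and \<open>T, T \<union> {e} \<in> S\<close>; these are separated for the deletion and the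
  contraction of \<open>e\<close>, and for \<open>S = L\<close> they are the corresponding lexicographic families there.
  By induction on \<open>|E|\<close>, every separated family has at most \<open>|L|\<close> members, and strictly fewer if
  it leaves a circuit uncovered. A maximum-size family therefore covers every circuit. Because
  the contraction used here keeps non-minimal supports, the induction runs over circuit systems
  with strong elimination, which oriented matroids satisfy by the classical derivation of strong
  from weak elimination.\<close>

lemma fst_neg_sset [simp]: "fst (neg_sset X) = snd X"
  by (simp add: neg_sset_def)

lemma snd_neg_sset [simp]: "snd (neg_sset X) = fst X"
  by (simp add: neg_sset_def)

lemma supp_neg_sset [simp]: "supp (neg_sset X) = supp X"
  by (auto simp: supp_def)

section \<open>Strong circuit elimination\<close>

definition elim_keeping :: "'a signed_set set \<Rightarrow> 'a signed_set \<Rightarrow> 'a signed_set \<Rightarrow> 'a \<Rightarrow> 'a \<Rightarrow> bool" where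
  "elim_keeping C X Y e f \<longleftrightarrow>
     (\<exists>Z\<in>C. f \<in> supp Z \<and> fst Z \<subseteq> (fst X \<union> fst Y) - {e} \<and> snd Z \<subseteq> (snd X \<union> snd Y) - {e})"

definition sign_consistent :: "'a signed_set \<Rightarrow> 'a signed_set \<Rightarrow> 'a \<Rightarrow> bool" where
  "sign_consistent X Y f \<longleftrightarrow>
     f \<in> (fst X \<union> fst Y) - (snd X \<union> snd Y) \<or> f \<in> (snd X \<union> snd Y) - (fst X \<union> fst Y)"

definition strong_elim_upto :: "'a signed_set set \<Rightarrow> nat \<Rightarrow> bool" where
  "strong_elim_upto C n \<longleftrightarrow> (\<forall>X\<in>C. \<forall>Y\<in>C. \<forall>e f. card (supp X \<union> supp Y) \<le> n \<longrightarrow>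
     e \<in> fst X \<longrightarrow> e \<in> snd Y \<longrightarrow> sign_consistent X Y f \<longrightarrow> elim_keeping C X Y e f)"

lemma elim_keeping_commute: "elim_keeping C X Y e f = elim_keeping C Y X e f"
  unfolding elim_keeping_def by (simp add: Un_commute)

lemma sign_consistent_commute: "sign_consistent X Y f = sign_consistent Y X f"
  unfolding sign_consistent_def by auto

lemma strong_elim_uptoD:
  assumes "strong_elim_upto C n" "X \<in> C" "Y \<in> C" "card (supp X \<union> supp Y) \<le> n"
    and "e \<in> fst X" "e \<in> snd Y" "sign_consistent X Y f"
  shows "elim_keeping C X Y e f"
  using assms unfolding strong_elim_upto_def by blast

lemma strong_elim_upto_either_sign:
  assumes Q: "strong_elim_upto C n" and "W \<in> C" "Z \<in> C" and card: "card (supp W \<union> supp Z) \<le> n"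
    and x: "x \<in> fst W \<inter> snd Z \<or> x \<in> snd W \<inter> fst Z" and "sign_consistent W Z f"
  shows "elim_keeping C W Z x f"
proof (cases "x \<in> fst W \<inter> snd Z")
  case True
  then show ?thesis
    using strong_elim_uptoD[OF Q] assms by blast
next
  case False
  have "elim_keeping C Z W x f"
    using False x card assms by (intro strong_elim_uptoD[OF Q]) (auto simp: Un_commute sign_consistent_commute)
  then show ?thesis
    by (simp add: elim_keeping_commute)
qed

lemma card_le_if_subset_remove:
  assumes "finite U" "card U \<le> Suc n" "A \<subseteq> U - {a}" "a \<in> U"
  shows "card A \<le> n"
proof -
  have "card A \<le> card (U - {a})"
    using assms by (intro card_mono) auto
  also have "\<dots> \<le> n"
    using assms by (simp add: card_Diff_singleton)
  finally show ?thesis .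
qed

context
  fixes E :: "'a set" and C :: "'a signed_set set"
  assumes OM: "oriented_matroid E C"
begin

lemma om_finite: "finite E"
  using OM by (simp add: oriented_matroid_def)

lemma om_disjoint: "X \<in> C \<Longrightarrow> fst X \<inter> snd X = {}"
  using OM by (simp add: oriented_matroid_def)

lemma om_supp_subset: "X \<in> C \<Longrightarrow> supp X \<subseteq> E"
  using OM by (simp add: oriented_matroid_def)

lemma om_supp_nonempty: "X \<in> C \<Longrightarrow> supp X \<noteq> {}"
  using OM by (cases X) (auto simp: oriented_matroid_def supp_def)

lemma om_neg_closed: "X \<in> C \<Longrightarrow> neg_sset X \<in> C"
  using OM by (simp add: oriented_matroid_def)

lemma om_incomparable: "X \<in> C \<Longrightarrow> Y \<in> C \<Longrightarrow> supp X \<subseteq> supp Y \<Longrightarrow> X = Y \<or> X = neg_sset Y"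
  using OM by (simp add: oriented_matroid_def)

lemma om_supp_not_psubset: "X \<in> C \<Longrightarrow> Y \<in> C \<Longrightarrow> \<not> supp X \<subset> supp Y"
  using om_incomparable[of X Y] by auto

lemma om_weak_elim:
  "X \<in> C \<Longrightarrow> Y \<in> C \<Longrightarrow> X \<noteq> neg_sset Y \<Longrightarrow> e \<in> fst X \<Longrightarrow> e \<in> snd Y \<Longrightarrow>
   \<exists>Z\<in>C. fst Z \<subseteq> (fst X \<union> fst Y) - {e} \<and> snd Z \<subseteq> (snd X \<union> snd Y) - {e}"
  using OM unfolding oriented_matroid_def by blast

lemma elim_keeping_neg_sset:
  assumes "elim_keeping C (neg_sset X) (neg_sset Y) e f"
  shows "elim_keeping C X Y e f"
proof -
  obtain Z where "Z \<in> C" "f \<in> supp Z"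
      "fst Z \<subseteq> (snd X \<union> snd Y) - {e}" "snd Z \<subseteq> (fst X \<union> fst Y) - {e}"
    using assms unfolding elim_keeping_def by auto
  then show ?thesis
    unfolding elim_keeping_def by (intro bexI[of _ "neg_sset Z"] om_neg_closed) simp_all
qed

lemma om_finite_supp_Un: "X \<in> C \<Longrightarrow> Y \<in> C \<Longrightarrow> finite (supp X \<union> supp Y)"
  using om_supp_subset om_finite finite_subset by (metis finite_Un)

lemma om_weak_elim_cases:
  assumes XC: "X \<in> C" and YC: "Y \<in> C" and "X \<noteq> neg_sset Y" and e: "e \<in> fst X" "e \<in> snd Y"
  obtains (direct) "elim_keeping C X Y e f"
    | (missing) Z0 g where "Z0 \<in> C" "fst Z0 \<subseteq> fst X \<union> fst Y" "snd Z0 \<subseteq> snd X \<union> snd Y"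
        "e \<notin> supp Z0" "f \<notin> supp Z0" "g \<in> supp Z0" "g \<notin> supp X"
proof -
  obtain Z0 where Z0: "Z0 \<in> C" "fst Z0 \<subseteq> (fst X \<union> fst Y) - {e}" "snd Z0 \<subseteq> (snd X \<union> snd Y) - {e}"
    using om_weak_elim[OF XC YC assms(3) e] by blast
  show ?thesis
  proof (cases "f \<in> supp Z0")
    case True
    then show ?thesis
      using Z0 direct unfolding elim_keeping_def by blast
  next
    case False
    have eZ0: "e \<notin> supp Z0"
      using Z0 by (auto simp: supp_def)
    have "\<not> supp Z0 \<subseteq> supp X"
      using om_incomparable[OF Z0(1) XC] e(1) eZ0 by (auto simp: supp_def)
    then show ?thesis
      using missing[OF Z0(1) _ _ eZ0 False] Z0(2,3) by blast
  qed
qed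

text \<open>Given a weak elimination \<open>Z0\<close> of \<open>e\<close> that misses \<open>f\<close>, any circuit \<open>W\<close> through \<open>f\<close>
  whose wrongly signed elements all lie in \<open>Z0\<close> can be repaired: eliminating such an
  element between \<open>W\<close> and \<open>Z0\<close> happens inside \<open>supp X \<union> supp Y - {e}\<close>, where strong
  elimination is already available, and strictly decreases the number of wrong signs.\<close>

lemma elim_keeping_by_repair:
  assumes Q: "strong_elim_upto C n" and XC: "X \<in> C" and YC: "Y \<in> C" and Z0C: "Z0 \<in> C"
    and card: "card (supp X \<union> supp Y) \<le> Suc n" and eX: "e \<in> supp X"
    and Z0: "fst Z0 \<subseteq> fst X \<union> fst Y" "snd Z0 \<subseteq> snd X \<union> snd Y" "e \<notin> supp Z0" "f \<notin> supp Z0"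
  shows "W \<in> C \<Longrightarrow> f \<in> supp W \<Longrightarrow> e \<notin> supp W \<Longrightarrow> supp W \<subseteq> supp X \<union> supp Y \<Longrightarrow>
     fst W \<subseteq> fst X \<union> fst Y \<union> snd Z0 \<Longrightarrow> snd W \<subseteq> snd X \<union> snd Y \<union> fst Z0 \<Longrightarrow>
     elim_keeping C X Y e f"
proof (induction "card ((fst W - (fst X \<union> fst Y)) \<union> (snd W - (snd X \<union> snd Y)))"
    arbitrary: W rule: less_induct)
  case less
  define B where "B = (fst W - (fst X \<union> fst Y)) \<union> (snd W - (snd X \<union> snd Y))"
  show ?case
  proof (cases "B = {}")
    case True
    then show ?thesis
      unfolding elim_keeping_def using less.prems B_def by (intro bexI[of _ W]) (auto simp: supp_def)
  next
    case False
    then obtain x where xB: "x \<in> B" by blast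
    have x: "x \<in> fst W \<inter> snd Z0 \<or> x \<in> snd W \<inter> fst Z0"
      using xB less.prems unfolding B_def by auto
    have consistent: "sign_consistent W Z0 f"
      using less.prems Z0 om_disjoint[OF less.prems(1)] unfolding sign_consistent_def supp_def by auto
    have sZ0: "supp Z0 \<subseteq> supp X \<union> supp Y"
      using Z0 by (auto simp: supp_def)
    have "card (supp W \<union> supp Z0) \<le> n"
      using card_le_if_subset_remove[OF om_finite_supp_Un[OF XC YC] card,
          of "supp W \<union> supp Z0" e] less.prems sZ0 Z0 eX by blast
    from strong_elim_upto_either_sign[OF Q less.prems(1) Z0C this x consistent]
    obtain W2 where W2: "W2 \<in> C" "f \<in> supp W2"
        "fst W2 \<subseteq> (fst W \<union> fst Z0) - {x}" "snd W2 \<subseteq> (snd W \<union> snd Z0) - {x}"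
      unfolding elim_keeping_def by blast
    define B2 where "B2 = (fst W2 - (fst X \<union> fst Y)) \<union> (snd W2 - (snd X \<union> snd Y))"
    have "finite B"
      unfolding B_def using om_finite_supp_Un[OF less.prems(1) less.prems(1)]
      by (rule finite_subset[rotated]) (auto simp: supp_def)
    moreover have "B2 \<subseteq> B - {x}"
      using W2 Z0 unfolding B2_def B_def by auto
    ultimately have "card B2 < card B"
      using xB by (meson card_Diff1_less card_mono finite_Diff le_less_trans)
    moreover have "e \<notin> supp W2" "supp W2 \<subseteq> supp X \<union> supp Y"
      "fst W2 \<subseteq> fst X \<union> fst Y \<union> snd Z0" "snd W2 \<subseteq> snd X \<union> snd Y \<union> fst Z0"
      using W2(3,4) less.prems(3-6) Z0 sZ0 by (auto simp: supp_def)
    ultimately show ?thesis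
      using less.hyps[of W2] W2(1,2) unfolding B2_def B_def by blast
  qed
qed

lemma elim_keeping_step_unshared:
  assumes Q: "strong_elim_upto C n" and XC: "X \<in> C" and YC: "Y \<in> C"
    and card: "card (supp X \<union> supp Y) \<le> Suc n"
    and e: "e \<in> fst X" "e \<in> snd Y" and f: "f \<in> supp X" "f \<notin> supp Y"
  shows "elim_keeping C X Y e f"
proof -
  have neq: "X \<noteq> neg_sset Y"
    using f by auto
  show ?thesis
  proof (rule om_weak_elim_cases[OF XC YC neq e, of f])
    fix Z0 g
    assume missing: "Z0 \<in> C" "fst Z0 \<subseteq> fst X \<union> fst Y" "snd Z0 \<subseteq> snd X \<union> snd Y"
      "e \<notin> supp Z0" "f \<notin> supp Z0" "g \<in> supp Z0" "g \<notin> supp X"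
    have eX: "e \<in> supp X" and sZ0: "supp Z0 \<subseteq> supp X \<union> supp Y"
      using missing e by (auto simp: supp_def)
    have dX: "fst X \<inter> snd X = {}" and dY: "fst Y \<inter> snd Y = {}"
      using om_disjoint XC YC by blast+
    have card_YZ0: "card (supp Y \<union> supp (neg_sset Z0)) \<le> n"
      using card_le_if_subset_remove[OF om_finite_supp_Un[OF XC YC] card,
          of "supp Y \<union> supp Z0" f] f missing(5) sZ0 by auto
    have gYZ0: "g \<in> fst Y \<inter> snd (neg_sset Z0) \<or> g \<in> snd Y \<inter> fst (neg_sset Z0)"
      using missing by (auto simp: supp_def)
    have "sign_consistent Y (neg_sset Z0) e"
      using e missing(4) dY unfolding sign_consistent_def supp_def by auto
    from strong_elim_upto_either_sign[OF Q YC om_neg_closed[OF missing(1)] card_YZ0 gYZ0 this]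
    obtain Y1 where Y1: "Y1 \<in> C" "e \<in> supp Y1"
        "fst Y1 \<subseteq> (fst Y \<union> snd Z0) - {g}" "snd Y1 \<subseteq> (snd Y \<union> fst Z0) - {g}"
      unfolding elim_keeping_def by auto
    have eY1: "e \<in> snd Y1"
      using Y1 missing(4) e dY by (auto simp: supp_def)
    have "card (supp X \<union> supp Y1) \<le> n"
      using card_le_if_subset_remove[OF om_finite_supp_Un[OF XC YC] card,
          of "supp X \<union> supp Y1" g] missing(6,7) Y1 sZ0 by (auto simp: supp_def)
    moreover have "sign_consistent X Y1 f"
      using f missing(5) Y1 dX unfolding sign_consistent_def supp_def by auto
    ultimately obtain W where W: "W \<in> C" "f \<in> supp W"
        "fst W \<subseteq> (fst X \<union> fst Y1) - {e}" "snd W \<subseteq> (snd X \<union> snd Y1) - {e}"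
      using strong_elim_uptoD[OF Q XC Y1(1) _ e(1) eY1] unfolding elim_keeping_def by blast
    show ?thesis
      by (rule elim_keeping_by_repair[OF Q XC YC missing(1) card eX missing(2-5) W(1,2)])
        (use missing W Y1 in \<open>auto simp: supp_def\<close>)
  qed
qed

lemma elim_keeping_step_unshared_either_sign:
  assumes Q: "strong_elim_upto C n" and XC: "X \<in> C" and YC: "Y \<in> C"
    and card: "card (supp X \<union> supp Y) \<le> Suc n"
    and x: "x \<in> fst X \<inter> snd Y \<or> x \<in> snd X \<inter> fst Y" and f: "f \<in> supp X" "f \<notin> supp Y"
  shows "elim_keeping C X Y x f"
proof (cases "x \<in> fst X \<inter> snd Y")
  case True
  then show ?thesis
    by (intro elim_keeping_step_unshared[OF Q XC YC card _ _ f]) auto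
next
  case False
  have "elim_keeping C (neg_sset X) (neg_sset Y) x f"
  proof (rule elim_keeping_step_unshared[OF Q om_neg_closed[OF XC] om_neg_closed[OF YC]])
    show "card (supp (neg_sset X) \<union> supp (neg_sset Y)) \<le> Suc n"
      using card by simp
    show "x \<in> fst (neg_sset X)" "x \<in> snd (neg_sset Y)"
      using False x by auto
  qed (use f in simp_all)
  then show ?thesis
    by (rule elim_keeping_neg_sset)
qed

lemma elim_keeping_step_shared:
  assumes Q: "strong_elim_upto C n" and XC: "X \<in> C" and YC: "Y \<in> C"
    and card: "card (supp X \<union> supp Y) \<le> Suc n"
    and e: "e \<in> fst X" "e \<in> snd Y" and f: "f \<in> supp Y" and consistent: "sign_consistent X Y f"
  shows "elim_keeping C X Y e f"
proof -
  have neq: "X \<noteq> neg_sset Y"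
    using consistent unfolding sign_consistent_def by auto
  show ?thesis
  proof (rule om_weak_elim_cases[OF XC YC neq e, of f])
    fix Z0 g
    assume missing: "Z0 \<in> C" "fst Z0 \<subseteq> fst X \<union> fst Y" "snd Z0 \<subseteq> snd X \<union> snd Y"
      "e \<notin> supp Z0" "f \<notin> supp Z0" "g \<in> supp Z0" "g \<notin> supp X"
    have eX: "e \<in> supp X" and sZ0: "supp Z0 \<subseteq> supp X \<union> supp Y"
      using missing e by (auto simp: supp_def)
    have dX: "fst X \<inter> snd X = {}" and dY: "fst Y \<inter> snd Y = {}"
      using om_disjoint XC YC by blast+
    have card_YZ0: "card (supp Y \<union> supp (neg_sset Z0)) \<le> Suc n"
      using card_mono[OF om_finite_supp_Un[OF XC YC], of "supp Y \<union> supp Z0"] sZ0 card by auto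
    have gYZ0: "g \<in> fst Y \<inter> snd (neg_sset Z0) \<or> g \<in> snd Y \<inter> fst (neg_sset Z0)"
      using missing by (auto simp: supp_def)
    have "f \<notin> supp (neg_sset Z0)"
      using missing(5) by simp
    from elim_keeping_step_unshared_either_sign[OF Q YC om_neg_closed[OF missing(1)] card_YZ0 gYZ0 f this]
    obtain Y2 where Y2: "Y2 \<in> C" "f \<in> supp Y2"
        "fst Y2 \<subseteq> (fst Y \<union> snd Z0) - {g}" "snd Y2 \<subseteq> (snd Y \<union> fst Z0) - {g}"
      unfolding elim_keeping_def by auto
    show ?thesis
    proof (cases "e \<in> supp Y2")
      case False
      show ?thesis
        by (rule elim_keeping_by_repair[OF Q XC YC missing(1) card eX missing(2-5) Y2(1,2) False])
          (use missing Y2 in \<open>auto simp: supp_def\<close>)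
    next
      case True
      then have eY2: "e \<in> snd Y2"
        using Y2 missing(4) e dY by (auto simp: supp_def)
      have "card (supp X \<union> supp Y2) \<le> n"
        using card_le_if_subset_remove[OF om_finite_supp_Un[OF XC YC] card,
            of "supp X \<union> supp Y2" g] missing(6,7) Y2 sZ0 by (auto simp: supp_def)
      moreover have "sign_consistent X Y2 f"
        using consistent missing(5) Y2(2-4) unfolding sign_consistent_def supp_def by blast
      ultimately obtain W where W: "W \<in> C" "f \<in> supp W"
          "fst W \<subseteq> (fst X \<union> fst Y2) - {e}" "snd W \<subseteq> (snd X \<union> snd Y2) - {e}"
        using strong_elim_uptoD[OF Q XC Y2(1) _ e(1) eY2] unfolding elim_keeping_def by blast
      show ?thesis
        by (rule elim_keeping_by_repair[OF Q XC YC missing(1) card eX missing(2-5) W(1,2)])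
          (use missing W Y2 in \<open>auto simp: supp_def\<close>)
    qed
  qed
qed

lemma strong_elim_upto_Suc:
  assumes Q: "strong_elim_upto C n"
  shows "strong_elim_upto C (Suc n)"
  unfolding strong_elim_upto_def
proof (intro ballI allI impI)
  fix X Y e f
  assume XC: "X \<in> C" and YC: "Y \<in> C" and card: "card (supp X \<union> supp Y) \<le> Suc n"
    and e: "e \<in> fst X" "e \<in> snd Y" and consistent: "sign_consistent X Y f"
  have in_first: "elim_keeping C A B e f"
    if AB: "A \<in> C" "B \<in> C" "card (supp A \<union> supp B) \<le> Suc n" "e \<in> fst A" "e \<in> snd B"
      and consistent: "sign_consistent A B f" and "f \<in> supp A" for A B
  proof (cases "f \<in> supp B")
    case True
    show ?thesis
      by (rule elim_keeping_step_shared[OF Q AB True consistent])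
  next
    case False
    show ?thesis
      by (rule elim_keeping_step_unshared[OF Q AB \<open>f \<in> supp A\<close> False])
  qed
  show "elim_keeping C X Y e f"
  proof (cases "f \<in> supp X")
    case True
    show ?thesis
      by (rule in_first[OF XC YC card e consistent True])
  next
    case False
    have "elim_keeping C (neg_sset Y) (neg_sset X) e f"
    proof (rule in_first[OF om_neg_closed[OF YC] om_neg_closed[OF XC]])
      show "card (supp (neg_sset Y) \<union> supp (neg_sset X)) \<le> Suc n"
        using card by (simp add: Un_commute)
      show "sign_consistent (neg_sset Y) (neg_sset X) f" "f \<in> supp (neg_sset Y)"
        using consistent False unfolding sign_consistent_def supp_def by auto
    qed (use e in simp_all)
    then have "elim_keeping C (neg_sset X) (neg_sset Y) e f"
      by (simp add: elim_keeping_commute)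
    then show ?thesis
      by (rule elim_keeping_neg_sset)
  qed
qed

lemma om_strong_elim:
  assumes "X \<in> C" "Y \<in> C" "e \<in> fst X" "e \<in> snd Y" "sign_consistent X Y f"
  shows "elim_keeping C X Y e f"
proof -
  have "strong_elim_upto C n" for n
  proof (induction n)
    case 0
    show ?case
      unfolding strong_elim_upto_def
    proof (intro ballI allI impI)
      fix X Y e f
      assume "X \<in> C" "Y \<in> C" "card (supp X \<union> supp Y) \<le> 0" "e \<in> fst X"
      then have "supp X \<union> supp Y = {}"
        using om_finite_supp_Un[of X Y] by simp
      then show "elim_keeping C X Y e f"
        using \<open>e \<in> fst X\<close> by (simp add: supp_def)
    qed
  qed (rule strong_elim_upto_Suc)
  then show ?thesis
    using strong_elim_uptoD assms order.refl by metis
qed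

end

section \<open>Circuit systems with strong elimination, deletion and contraction\<close>

text \<open>Unlike oriented matroids, such systems need not have incomparable supports, which makes
  them closed under the naive contraction below.\<close>

definition strong_circuit_system :: "'a set \<Rightarrow> 'a signed_set set \<Rightarrow> bool" where
  "strong_circuit_system E C \<longleftrightarrow> finite E \<and>
     (\<forall>X\<in>C. fst X \<inter> snd X = {} \<and> supp X \<subseteq> E \<and> supp X \<noteq> {}) \<and>
     (\<forall>X\<in>C. neg_sset X \<in> C) \<and>
     (\<forall>X\<in>C. \<forall>Y\<in>C. \<forall>e f. e \<in> fst X \<longrightarrow> e \<in> snd Y \<longrightarrow> sign_consistent X Y f \<longrightarrow>
        elim_keeping C X Y e f)"

definition circuits_del :: "'a \<Rightarrow> 'a signed_set set \<Rightarrow> 'a signed_set set" where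
  "circuits_del e C = {X\<in>C. e \<notin> supp X}"

definition circuits_con :: "'a \<Rightarrow> 'a signed_set set \<Rightarrow> 'a signed_set set" where
  "circuits_con e C = (\<lambda>X. (fst X - {e}, snd X - {e})) ` {X\<in>C. supp X \<noteq> {e}}"

lemma oriented_matroid_strong_circuit_system:
  assumes "oriented_matroid E C"
  shows "strong_circuit_system E C"
  unfolding strong_circuit_system_def
  using om_finite[OF assms] om_disjoint[OF assms] om_supp_subset[OF assms]
    om_supp_nonempty[OF assms] om_neg_closed[OF assms] om_strong_elim[OF assms]
  by blast

context
  fixes E :: "'a set" and C :: "'a signed_set set"
  assumes K: "strong_circuit_system E C"
begin

lemma scs_finite: "finite E"
  using K by (simp add: strong_circuit_system_def)

lemma scs_disjoint: "X \<in> C \<Longrightarrow> fst X \<inter> snd X = {}"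
  using K by (simp add: strong_circuit_system_def)

lemma scs_supp_subset: "X \<in> C \<Longrightarrow> supp X \<subseteq> E"
  using K by (simp add: strong_circuit_system_def)

lemma scs_supp_nonempty: "X \<in> C \<Longrightarrow> supp X \<noteq> {}"
  using K by (simp add: strong_circuit_system_def)

lemma scs_neg_closed: "X \<in> C \<Longrightarrow> neg_sset X \<in> C"
  using K by (simp add: strong_circuit_system_def)

lemma scs_strong_elim:
  "X \<in> C \<Longrightarrow> Y \<in> C \<Longrightarrow> e \<in> fst X \<Longrightarrow> e \<in> snd Y \<Longrightarrow> sign_consistent X Y f \<Longrightarrow>
   \<exists>Z\<in>C. f \<in> supp Z \<and> fst Z \<subseteq> (fst X \<union> fst Y) - {e} \<and> snd Z \<subseteq> (snd X \<union> snd Y) - {e}"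
  using K unfolding strong_circuit_system_def elim_keeping_def by blast

lemma strong_circuit_system_del: "strong_circuit_system (E - {e}) (circuits_del e C)"
proof -
  have "elim_keeping (circuits_del e C) X Y x f"
    if XY: "X \<in> circuits_del e C" "Y \<in> circuits_del e C"
      and x: "x \<in> fst X" "x \<in> snd Y" and consistent: "sign_consistent X Y f" for X Y x f
  proof -
    have "X \<in> C" "Y \<in> C"
      using XY unfolding circuits_del_def by auto
    then obtain Z where "Z \<in> C" "f \<in> supp Z"
        "fst Z \<subseteq> (fst X \<union> fst Y) - {x}" "snd Z \<subseteq> (snd X \<union> snd Y) - {x}"
      using scs_strong_elim x consistent by blast
    moreover from this have "Z \<in> circuits_del e C"
      using XY unfolding circuits_del_def supp_def by auto
    ultimately show ?thesis
      unfolding elim_keeping_def by blast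
  qed
  moreover have "\<forall>X\<in>circuits_del e C. fst X \<inter> snd X = {} \<and> supp X \<subseteq> E - {e} \<and> supp X \<noteq> {}"
    using scs_disjoint scs_supp_subset scs_supp_nonempty unfolding circuits_del_def by blast
  moreover have "\<forall>X\<in>circuits_del e C. neg_sset X \<in> circuits_del e C"
    using scs_neg_closed unfolding circuits_del_def by simp
  ultimately show ?thesis
    unfolding strong_circuit_system_def using scs_finite by blast
qed

lemma strong_circuit_system_con: "strong_circuit_system (E - {e}) (circuits_con e C)"
proof -
  have circuit_props: "fst X' \<inter> snd X' = {} \<and> supp X' \<subseteq> E - {e} \<and> supp X' \<noteq> {}"
    if X': "X' \<in> circuits_con e C" for X'
  proof -
    obtain X where X: "X \<in> C" "supp X \<noteq> {e}" "X' = (fst X - {e}, snd X - {e})"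
      using X' unfolding circuits_con_def by blast
    have "supp X \<noteq> {}" "supp X \<subseteq> E" "fst X \<inter> snd X = {}"
      using scs_supp_nonempty scs_supp_subset scs_disjoint X(1) by auto
    then show ?thesis
      using X(2,3) by (auto simp: supp_def)
  qed
  have neg_closed: "neg_sset X' \<in> circuits_con e C" if X': "X' \<in> circuits_con e C" for X'
  proof -
    obtain X where X: "X \<in> C" "supp X \<noteq> {e}" "X' = (fst X - {e}, snd X - {e})"
      using X' unfolding circuits_con_def by blast
    have "neg_sset X \<in> C" "supp (neg_sset X) \<noteq> {e}"
      using scs_neg_closed X by auto
    moreover have "neg_sset X' = (fst (neg_sset X) - {e}, snd (neg_sset X) - {e})"
      using X(3) by (simp add: neg_sset_def)
    ultimately show ?thesis
      unfolding circuits_con_def by blast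
  qed
  have elim: "elim_keeping (circuits_con e C) X' Y' x f"
    if XY': "X' \<in> circuits_con e C" "Y' \<in> circuits_con e C" "x \<in> fst X'" "x \<in> snd Y'"
      and consistent: "sign_consistent X' Y' f" for X' Y' x f
  proof -
    obtain X where X: "X \<in> C" "X' = (fst X - {e}, snd X - {e})"
      using XY'(1) unfolding circuits_con_def by blast
    obtain Y where Y: "Y \<in> C" "Y' = (fst Y - {e}, snd Y - {e})"
      using XY'(2) unfolding circuits_con_def by blast
    have x: "x \<in> fst X" "x \<in> snd Y"
      using XY'(3,4) X(2) Y(2) by auto
    have "sign_consistent X Y f" "f \<noteq> e"
      using consistent X(2) Y(2) unfolding sign_consistent_def by auto
    then obtain Z where Z: "Z \<in> C" "f \<in> supp Z"
        "fst Z \<subseteq> (fst X \<union> fst Y) - {x}" "snd Z \<subseteq> (snd X \<union> snd Y) - {x}"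
      using scs_strong_elim[OF X(1) Y(1) x] by blast
    have "(fst Z - {e}, snd Z - {e}) \<in> circuits_con e C"
      using Z(1,2) \<open>f \<noteq> e\<close> unfolding circuits_con_def by blast
    then show ?thesis
      unfolding elim_keeping_def using Z X(2) Y(2) \<open>f \<noteq> e\<close>
      by (intro bexI[of _ "(fst Z - {e}, snd Z - {e})"]) (auto simp: supp_def)
  qed
  show ?thesis
    unfolding strong_circuit_system_def using scs_finite circuit_props neg_closed elim by blast
qed

end

section \<open>Deletion and contraction of separated families\<close>

definition family_del :: "'a \<Rightarrow> 'a set set \<Rightarrow> 'a set set" where
  "family_del e S = (\<lambda>T. T - {e}) ` S"

definition family_con :: "'a \<Rightarrow> 'a set set \<Rightarrow> 'a set set" where
  "family_con e S = {T \<in> S. e \<notin> T \<and> insert e T \<in> S}"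

lemma card_family_split:
  assumes "finite S"
  shows "card S = card (family_del e S) + card (family_con e S)"
proof -
  define S0 where "S0 = {T \<in> S. e \<notin> T}"
  define S1 where "S1 = (\<lambda>T. T - {e}) ` {T \<in> S. e \<in> T}"
  have "card S = card S0 + card {T \<in> S. e \<in> T}"
  proof -
    have "card (S0 \<union> {T \<in> S. e \<in> T}) = card S0 + card {T \<in> S. e \<in> T}"
      using assms by (intro card_Un_disjoint) (auto simp: S0_def)
    moreover have "S0 \<union> {T \<in> S. e \<in> T} = S"
      unfolding S0_def by auto
    ultimately show ?thesis
      by simp
  qed
  also have "card {T \<in> S. e \<in> T} = card S1"
    unfolding S1_def by (rule card_image[symmetric]) (auto simp: inj_on_def)
  also have "card S0 + card S1 = card (S0 \<union> S1) + card (S0 \<inter> S1)"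
    using assms by (intro card_Un_Int) (auto simp: S0_def S1_def)
  also have "S0 \<union> S1 = family_del e S"
  proof -
    have "(\<lambda>T. T - {e}) ` S0 = (\<lambda>T. T) ` S0"
      by (rule image_cong[OF refl]) (simp add: S0_def)
    then have "(\<lambda>T. T - {e}) ` S0 = S0"
      by simp
    moreover have "S = S0 \<union> {T \<in> S. e \<in> T}"
      unfolding S0_def by auto
    then have "family_del e S = (\<lambda>T. T - {e}) ` S0 \<union> S1"
      unfolding family_del_def S1_def by (subst (1) \<open>S = _\<close>) (rule image_Un)
    ultimately show ?thesis
      by simp
  qed
  also have "S0 \<inter> S1 = family_con e S"
  proof (rule set_eqI)
    fix T
    have "T \<in> S1 \<longleftrightarrow> insert e T \<in> S" if "e \<notin> T"
    proof
      assume "T \<in> S1"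
      then show "insert e T \<in> S"
        unfolding S1_def by (auto simp: insert_absorb)
    next
      assume "insert e T \<in> S"
      then show "T \<in> S1"
        unfolding S1_def using that by (intro image_eqI[of _ _ "insert e T"]) auto
    qed
    then show "T \<in> S0 \<inter> S1 \<longleftrightarrow> T \<in> family_con e S"
      unfolding S0_def family_con_def by auto
  qed
  finally show ?thesis .
qed

lemma separated_collection_finite:
  "M_separated_collection E C S \<Longrightarrow> finite E \<Longrightarrow> finite S"
  unfolding M_separated_collection_def by (meson finite_Pow_iff finite_subset)

lemma separated_family_del:
  assumes sep: "M_separated_collection E C S"
  shows "M_separated_collection (E - {e}) (circuits_del e C) (family_del e S)"
  unfolding M_separated_collection_def
proof (intro conjI ballI)
  show "family_del e S \<subseteq> Pow (E - {e})"
    using sep unfolding M_separated_collection_def family_del_def by auto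
next
  fix I J
  assume "I \<in> family_del e S" "J \<in> family_del e S"
  then obtain I' J' where IJ: "I' \<in> S" "J' \<in> S" "I = I' - {e}" "J = J' - {e}"
    unfolding family_del_def by blast
  show "M_separated (circuits_del e C) I J"
    unfolding M_separated_def
  proof
    assume "\<exists>X\<in>circuits_del e C. fst X \<subseteq> I - J \<and> snd X \<subseteq> J - I"
    then obtain X where "X \<in> C" "fst X \<subseteq> I' - J'" "snd X \<subseteq> J' - I'"
      using IJ unfolding circuits_del_def supp_def by blast
    then show False
      using sep IJ(1,2) unfolding M_separated_collection_def M_separated_def by blast
  qed
qed

lemma separated_family_con:
  assumes sep: "M_separated_collection E C S" and disj: "\<And>X. X \<in> C \<Longrightarrow> fst X \<inter> snd X = {}"
  shows "M_separated_collection (E - {e}) (circuits_con e C) (family_con e S)"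
  unfolding M_separated_collection_def
proof (intro conjI ballI)
  show "family_con e S \<subseteq> Pow (E - {e})"
    using sep unfolding M_separated_collection_def family_con_def by auto
next
  fix I J
  assume I: "I \<in> family_con e S" and J: "J \<in> family_con e S"
  have not_sep: "\<not> M_separated C I' J'" if "X \<in> C" "fst X \<subseteq> I' - J'" "snd X \<subseteq> J' - I'" for X I' J'
    using that unfolding M_separated_def by blast
  show "M_separated (circuits_con e C) I J"
    unfolding M_separated_def
  proof
    assume "\<exists>X'\<in>circuits_con e C. fst X' \<subseteq> I - J \<and> snd X' \<subseteq> J - I"
    then obtain X' where "X' \<in> circuits_con e C" "fst X' \<subseteq> I - J" "snd X' \<subseteq> J - I"
      by blast
    moreover from this(1) obtain X where "X \<in> C" "X' = (fst X - {e}, snd X - {e})"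
      unfolding circuits_con_def by blast
    ultimately have X: "X \<in> C" "fst X - {e} \<subseteq> I - J" "snd X - {e} \<subseteq> J - I"
      by auto
    text \<open>Put \<open>e\<close> back on the side of its sign in \<open>X\<close>.\<close>
    consider "e \<in> fst X" | "e \<in> snd X" | "e \<notin> supp X"
      unfolding supp_def by blast
    then have "\<not> M_separated C (insert e I) J \<or> \<not> M_separated C I (insert e J) \<or> \<not> M_separated C I J"
    proof cases
      case 1
      then have "fst X \<subseteq> insert e I - J" "snd X \<subseteq> J - insert e I"
        using X disj[OF X(1)] I J unfolding family_con_def by auto
      then show ?thesis
        using not_sep X(1) by blast
    next
      case 2
      then have "fst X \<subseteq> I - insert e J" "snd X \<subseteq> insert e J - I"
        using X disj[OF X(1)] I J unfolding family_con_def by auto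
      then show ?thesis
        using not_sep X(1) by blast
    next
      case 3
      then have "fst X \<subseteq> I - J" "snd X \<subseteq> J - I"
        using X unfolding supp_def by auto
      then show ?thesis
        using not_sep X(1) by blast
    qed
    then show False
      using sep I J unfolding M_separated_collection_def family_con_def by blast
  qed
qed

lemma family_con_empty_if_loop:
  assumes sep: "M_separated_collection E C S" and loop: "({}, {e}) \<in> C"
  shows "family_con e S = {}"
proof -
  have "\<not> M_separated C T (insert e T)" if "e \<notin> T" for T
  proof -
    have "fst ({}, {e}) \<subseteq> T - insert e T" "snd ({}, {e}) \<subseteq> insert e T - T"
      using that by auto
    then show ?thesis
      using loop unfolding M_separated_def by blast
  qed
  then show ?thesis
    using sep unfolding M_separated_collection_def family_con_def by blast
qed

section \<open>The lexicographic separated family\<close>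

lemma ex_min_rank:
  fixes r :: "'a \<Rightarrow> nat"
  assumes "finite U" "U \<noteq> {}"
  obtains d where "d \<in> U" "\<forall>u\<in>U. r d \<le> r u"
proof -
  have "Min (r ` U) \<in> r ` U"
    using assms by simp
  then obtain d where "d \<in> U" "r d = Min (r ` U)"
    by auto
  then show ?thesis
    using that assms(1) by simp
qed

lemma ex_max_rank_remove:
  fixes r :: "'a \<Rightarrow> nat"
  assumes "finite E" "card E = Suc n" "inj_on r E"
  obtains e where "e \<in> E" "\<forall>y\<in>E - {e}. r y < r e" "n = card (E - {e})" "inj_on r (E - {e})"
proof -
  have "E \<noteq> {}"
    using assms(2) by auto
  then have "Max (r ` E) \<in> r ` E"
    using assms(1) by simp
  then obtain e where e: "e \<in> E" "r e = Max (r ` E)"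
    by auto
  have "r y < r e" if y: "y \<in> E - {e}" for y
  proof -
    have "r y \<le> r e"
      using e assms(1) y by simp
    moreover have "r y \<noteq> r e"
      using assms(3) y e(1) unfolding inj_on_def by blast
    ultimately show ?thesis
      by simp
  qed
  moreover have "n = card (E - {e})"
    using assms(1,2) e(1) by simp
  moreover have "inj_on r (E - {e})"
    using assms(3) by (rule inj_on_subset) auto
  ultimately show ?thesis
    using that e(1) by blast
qed

definition conforms :: "'a signed_set \<Rightarrow> 'a set \<Rightarrow> bool" where
  "conforms X T \<longleftrightarrow> fst X \<subseteq> T \<and> snd X \<inter> T = {}"

definition positive_first :: "('a \<Rightarrow> nat) \<Rightarrow> 'a signed_set \<Rightarrow> bool" where
  "positive_first r X \<longleftrightarrow> (\<exists>x\<in>fst X. \<forall>y\<in>snd X. r x < r y)"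

definition lex_family :: "('a \<Rightarrow> nat) \<Rightarrow> 'a set \<Rightarrow> 'a signed_set set \<Rightarrow> 'a set set" where
  "lex_family r E C = {T. T \<subseteq> E \<and> (\<forall>X\<in>C. conforms X T \<longrightarrow> positive_first r X)}"

lemma positive_first_if_min_positive:
  assumes "fst X \<inter> snd X = {}" "inj_on r (supp X)" "d \<in> fst X" "\<forall>u\<in>supp X. r d \<le> r u"
  shows "positive_first r X"
  unfolding positive_first_def
proof (intro bexI ballI)
  fix y
  assume y: "y \<in> snd X"
  have "d \<noteq> y"
    using assms(1,3) y by blast
  then have "r d \<noteq> r y"
    using inj_onD[OF assms(2)] assms(3) y unfolding supp_def by blast
  moreover have "r d \<le> r y"
    using assms(4) y unfolding supp_def by blast
  ultimately show "r d < r y"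
    by simp
qed (fact assms(3))

lemma lex_family_separated:
  assumes "\<And>X. X \<in> C \<Longrightarrow> neg_sset X \<in> C"
  shows "M_separated_collection E C (lex_family r E C)"
  unfolding M_separated_collection_def
proof (intro conjI ballI)
  show "lex_family r E C \<subseteq> Pow E"
    unfolding lex_family_def by auto
next
  fix I J
  assume I: "I \<in> lex_family r E C" and J: "J \<in> lex_family r E C"
  show "M_separated C I J"
    unfolding M_separated_def
  proof
    assume "\<exists>X\<in>C. fst X \<subseteq> I - J \<and> snd X \<subseteq> J - I"
    then obtain X where X: "X \<in> C" "fst X \<subseteq> I - J" "snd X \<subseteq> J - I"
      by blast
    have "conforms X I" "conforms (neg_sset X) J"
      using X unfolding conforms_def by auto
    then have "positive_first r X" "positive_first r (neg_sset X)"
      using I J X(1) assms unfolding lex_family_def by blast+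
    then obtain x y where "x \<in> fst X" "\<forall>y\<in>snd X. r x < r y" "y \<in> snd X" "\<forall>x\<in>fst X. r y < r x"
      unfolding positive_first_def by auto
    then show False
      by fastforce
  qed
qed

lemma lex_family_remove:
  assumes "T \<in> lex_family r E C"
  shows "T - {e} \<in> lex_family r (E - {e}) (circuits_del e C)"
  using assms unfolding lex_family_def circuits_del_def conforms_def supp_def by blast

lemma lex_family_conD:
  assumes "T \<in> lex_family r E' (circuits_con e C)" "X \<in> C" "supp X \<noteq> {e}"
    and "conforms (fst X - {e}, snd X - {e}) T"
  shows "\<exists>x\<in>fst X - {e}. \<forall>y\<in>snd X - {e}. r x < r y"
proof -
  have "(fst X - {e}, snd X - {e}) \<in> circuits_con e C"
    using assms(2,3) unfolding circuits_con_def by blast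
  then have "positive_first r (fst X - {e}, snd X - {e})"
    using assms(1,4) unfolding lex_family_def by blast
  then show ?thesis
    unfolding positive_first_def by simp
qed

context
  fixes E :: "'a set" and C :: "'a signed_set set" and r :: "'a \<Rightarrow> nat" and e :: 'a
  assumes K: "strong_circuit_system E C" and inj: "inj_on r E"
    and eE: "e \<in> E" and e_max: "\<forall>y\<in>E - {e}. r y < r e"
begin

lemma least_rank_not_positive:
  assumes W: "W \<in> C" "\<not> positive_first r W" and d: "d \<in> E - {e}" "\<forall>u\<in>supp W - {e}. r d \<le> r u"
  shows "d \<notin> fst W"
proof
  assume dW: "d \<in> fst W"
  have "r d \<le> r u" if "u \<in> supp W" for u
    using that d e_max by (cases "u = e") (auto simp: less_imp_le)
  then have "positive_first r W"
    using positive_first_if_min_positive[OF scs_disjoint[OF K W(1)]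
        inj_on_subset[OF inj scs_supp_subset[OF K W(1)]] dW] by blast
  then show False
    using W(2) by contradiction
qed

text \<open>If neither \<open>T\<close> nor \<open>T \<union> {e}\<close> belonged to the family, the two offending circuits \<open>X\<close> and \<open>Z\<close>
  could be eliminated at \<open>e\<close> keeping the least element \<open>d\<close> of their supports; the result
  avoids \<open>e\<close>, conforms to \<open>T\<close>, and has \<open>d\<close> as a negative element of least rank.\<close>

lemma insert_mem_lex_family:
  assumes TD: "T \<in> lex_family r (E - {e}) (circuits_del e C)" and nA: "T \<notin> lex_family r E C"
  shows "insert e T \<in> lex_family r E C"
proof (rule ccontr)
  assume nI: "insert e T \<notin> lex_family r E C"
  have TE: "T \<subseteq> E - {e}"
    using TD unfolding lex_family_def by blast
  have good_del: "positive_first r W" if "W \<in> C" "e \<notin> supp W" "conforms W T" for W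
    using TD that unfolding lex_family_def circuits_del_def by blast
  obtain Z where Z: "Z \<in> C" "conforms Z (insert e T)" "\<not> positive_first r Z"
    using nI TE eE unfolding lex_family_def by blast
  obtain X where X: "X \<in> C" "conforms X T" "\<not> positive_first r X"
    using nA TE unfolding lex_family_def by blast
  have eX: "e \<in> snd X"
    using good_del[OF X(1) _ X(2)] X(2,3) TE unfolding conforms_def supp_def by auto
  have eZ: "e \<in> fst Z"
    using good_del[OF Z(1)] Z(2,3) unfolding conforms_def supp_def by auto
  define U where "U = (supp X \<union> supp Z) - {e}"
  have UE: "U \<subseteq> E - {e}"
    using scs_supp_subset[OF K X(1)] scs_supp_subset[OF K Z(1)] unfolding U_def by auto
  have "snd Z \<noteq> {}"
    using Z(3) eZ unfolding positive_first_def by auto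
  then have "U \<noteq> {}"
    using Z(2) unfolding U_def conforms_def supp_def by auto
  then obtain d where d: "d \<in> U" "\<forall>u\<in>U. r d \<le> r u"
    using ex_min_rank[of U r] finite_subset[OF UE] scs_finite[OF K] by blast
  have "\<forall>u\<in>supp X - {e}. r d \<le> r u" "\<forall>u\<in>supp Z - {e}. r d \<le> r u"
    using d(2) unfolding U_def by auto
  then have "d \<notin> fst X" "d \<notin> fst Z"
    using least_rank_not_positive X(1,3) Z(1,3) d(1) UE by blast+
  then have "d \<in> snd X \<union> snd Z"
    using d(1) \<open>d \<notin> fst X\<close> \<open>d \<notin> fst Z\<close> unfolding U_def supp_def by blast
  then have "sign_consistent Z X d"
    using \<open>d \<notin> fst X\<close> \<open>d \<notin> fst Z\<close> unfolding sign_consistent_def by blast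
  then obtain W where W: "W \<in> C" "d \<in> supp W"
      "fst W \<subseteq> (fst Z \<union> fst X) - {e}" "snd W \<subseteq> (snd Z \<union> snd X) - {e}"
    using scs_strong_elim[OF K Z(1) X(1) eZ eX] by blast
  have "conforms W T" "e \<notin> supp W"
    using W X(2) Z(2) unfolding conforms_def supp_def by auto
  then obtain x where x: "x \<in> fst W" "\<forall>y\<in>snd W. r x < r y"
    using good_del W(1) unfolding positive_first_def by blast
  have "d \<in> snd W"
    using W(2,3) \<open>d \<notin> fst X\<close> \<open>d \<notin> fst Z\<close> unfolding supp_def by blast
  moreover have "x \<in> U"
    using x(1) W(3) unfolding U_def supp_def by blast
  ultimately show False
    using d(2) x(2) by fastforce
qed

lemma family_del_lex_family:
  "family_del e (lex_family r E C) = lex_family r (E - {e}) (circuits_del e C)"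
proof
  show "family_del e (lex_family r E C) \<subseteq> lex_family r (E - {e}) (circuits_del e C)"
    unfolding family_del_def by (rule image_subsetI) (rule lex_family_remove)
next
  show "lex_family r (E - {e}) (circuits_del e C) \<subseteq> family_del e (lex_family r E C)"
  proof
    fix T
    assume T: "T \<in> lex_family r (E - {e}) (circuits_del e C)"
    then have "e \<notin> T"
      unfolding lex_family_def by blast
    then have "T = T - {e}" "T = insert e T - {e}"
      by auto
    then show "T \<in> family_del e (lex_family r E C)"
      using insert_mem_lex_family[OF T] unfolding family_del_def by (metis image_eqI)
  qed
qed

lemma lex_family_con_if_both:
  assumes T: "T \<in> lex_family r E C" and eT: "insert e T \<in> lex_family r E C" "e \<notin> T"
  shows "T \<in> lex_family r (E - {e}) (circuits_con e C)"
  unfolding lex_family_def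
proof (intro CollectI conjI ballI impI)
  show "T \<subseteq> E - {e}"
    using T eT unfolding lex_family_def by auto
next
  fix X'
  assume X': "X' \<in> circuits_con e C" and conf: "conforms X' T"
  obtain X where X: "X \<in> C" "supp X \<noteq> {e}" "X' = (fst X - {e}, snd X - {e})"
    using X' unfolding circuits_con_def by blast
  have dX: "fst X \<inter> snd X = {}"
    using scs_disjoint[OF K X(1)] .
  show "positive_first r X'"
  proof (cases "e \<in> fst X")
    case True
    then have "conforms X (insert e T)"
      using conf X(3) dX unfolding conforms_def by auto
    then obtain x where x: "x \<in> fst X" "\<forall>y\<in>snd X. r x < r y"
      using eT(1) X(1) unfolding lex_family_def positive_first_def by blast
    show ?thesis
    proof (cases "x = e")
      case False
      then show ?thesis
        using x X(3) unfolding positive_first_def by auto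
    next
      case True
      text \<open>\<open>e\<close> has the largest rank, so it precedes no negative element.\<close>
      have "snd X = {}"
      proof (rule ccontr)
        assume "snd X \<noteq> {}"
        then obtain y where y: "y \<in> snd X"
          by blast
        then have "y \<in> E - {e}"
          using scs_supp_subset[OF K X(1)] \<open>e \<in> fst X\<close> dX unfolding supp_def by auto
        then have "r y < r e"
          using e_max by blast
        moreover have "r e < r y"
          using x y True by blast
        ultimately show False
          by simp
      qed
      moreover obtain z where "z \<in> supp X" "z \<noteq> e"
        using X(2) scs_supp_nonempty[OF K X(1)] by blast
      ultimately show ?thesis
        using X(3) unfolding positive_first_def supp_def by auto
    qed
  next
    case False
    then have "conforms X T"
      using conf X(3) eT(2) unfolding conforms_def by auto
    then obtain x where "x \<in> fst X" "\<forall>y\<in>snd X. r x < r y"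
      using T X(1) unfolding lex_family_def positive_first_def by blast
    then show ?thesis
      using False X(3) unfolding positive_first_def by auto
  qed
qed

lemma lex_family_if_con:
  assumes no_loop: "({}, {e}) \<notin> C" and T: "T \<in> lex_family r (E - {e}) (circuits_con e C)"
  shows "T \<in> lex_family r E C"
  unfolding lex_family_def
proof (intro CollectI conjI ballI impI)
  have TE: "T \<subseteq> E - {e}"
    using T unfolding lex_family_def by blast
  then show "T \<subseteq> E"
    by auto
  fix X
  assume X: "X \<in> C" and conf: "conforms X T"
  show "positive_first r X"
  proof (cases "supp X = {e}")
    case True
    then have "X = ({}, {e})"
      using conf TE unfolding conforms_def supp_def by (cases X) auto
    then show ?thesis
      using no_loop X by simp
  next
    case False
    have "conforms (fst X - {e}, snd X - {e}) T"
      using conf unfolding conforms_def by auto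
    then obtain x where x: "x \<in> fst X - {e}" "\<forall>y\<in>snd X - {e}. r x < r y"
      using lex_family_conD[OF T X False] by blast
    have "r x < r e"
      using x scs_supp_subset[OF K X] e_max unfolding supp_def by blast
    then show ?thesis
      using x unfolding positive_first_def by (intro bexI[of _ x]) auto
  qed
qed

lemma insert_lex_family_if_con:
  assumes T: "T \<in> lex_family r (E - {e}) (circuits_con e C)"
  shows "insert e T \<in> lex_family r E C"
  unfolding lex_family_def
proof (intro CollectI conjI ballI impI)
  show "insert e T \<subseteq> E"
    using T eE unfolding lex_family_def by blast
  fix X
  assume X: "X \<in> C" and conf: "conforms X (insert e T)"
  have "e \<notin> snd X"
    using conf unfolding conforms_def by auto
  show "positive_first r X"
  proof (cases "supp X = {e}")
    case True
    then have "snd X = {}" "e \<in> fst X"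
      using \<open>e \<notin> snd X\<close> unfolding supp_def by auto
    then show ?thesis
      unfolding positive_first_def by auto
  next
    case False
    have "conforms (fst X - {e}, snd X - {e}) T"
      using conf unfolding conforms_def by auto
    then obtain x where "x \<in> fst X - {e}" "\<forall>y\<in>snd X - {e}. r x < r y"
      using lex_family_conD[OF T X False] by blast
    then show ?thesis
      using \<open>e \<notin> snd X\<close> unfolding positive_first_def by (intro bexI[of _ x]) auto
  qed
qed

lemma family_con_lex_family:
  assumes "({}, {e}) \<notin> C"
  shows "family_con e (lex_family r E C) = lex_family r (E - {e}) (circuits_con e C)"
proof (rule set_eqI)
  fix T
  have "e \<notin> T" if "T \<in> lex_family r (E - {e}) (circuits_con e C)"
    using that unfolding lex_family_def by blast
  then show "T \<in> family_con e (lex_family r E C) \<longleftrightarrow> T \<in> lex_family r (E - {e}) (circuits_con e C)"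
    unfolding family_con_def
    using lex_family_con_if_both lex_family_if_con[OF assms] insert_lex_family_if_con by blast
qed

lemma card_lex_family_split:
  "card (lex_family r E C)
     = card (lex_family r (E - {e}) (circuits_del e C)) + card (family_con e (lex_family r E C))"
proof -
  have "finite (lex_family r E C)"
    using separated_collection_finite[OF lex_family_separated scs_finite[OF K]]
      scs_neg_closed[OF K] by blast
  then show ?thesis
    using card_family_split family_del_lex_family by metis
qed

end

lemma card_separated_le_lex_family:
  assumes "strong_circuit_system E C" "inj_on r E" "M_separated_collection E C S"
  shows "card S \<le> card (lex_family r E C)"
  using assms
proof (induction "card E" arbitrary: E C S)
  case 0
  then have "E = {}"
    using scs_finite[OF "0.prems"(1)] by simp
  then have "C = {}"
    using scs_supp_subset[OF "0.prems"(1)] scs_supp_nonempty[OF "0.prems"(1)] by blast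
  then have "lex_family r E C = {{}}"
    using \<open>E = {}\<close> unfolding lex_family_def by auto
  moreover have "card S \<le> card {{}::'a set}"
    using \<open>E = {}\<close> "0.prems"(3) unfolding M_separated_collection_def by (intro card_mono) auto
  ultimately show ?case
    by simp
next
  case (Suc n)
  note K = Suc.prems(1) and inj = Suc.prems(2) and sep = Suc.prems(3)
  obtain e where eE: "e \<in> E" and e_max: "\<forall>y\<in>E - {e}. r y < r e"
    and n: "n = card (E - {e})" and inj': "inj_on r (E - {e})"
    using ex_max_rank_remove[OF scs_finite[OF K] Suc.hyps(2)[symmetric] inj] .
  have "card (family_del e S) \<le> card (lex_family r (E - {e}) (circuits_del e C))"
    by (rule Suc.hyps(1)[OF n strong_circuit_system_del[OF K] inj' separated_family_del[OF sep]])
  moreover have "card (family_con e S) \<le> card (family_con e (lex_family r E C))"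
  proof (cases "({}, {e}) \<in> C")
    case True
    then show ?thesis
      using family_con_empty_if_loop[OF sep] by simp
  next
    case False
    then show ?thesis
      using Suc.hyps(1)[OF n strong_circuit_system_con[OF K] inj'
          separated_family_con[OF sep scs_disjoint[OF K]]]
        family_con_lex_family[OF K inj eE e_max] by simp
  qed
  ultimately show ?case
    using card_family_split[OF separated_collection_finite[OF sep scs_finite[OF K]], of e]
      card_lex_family_split[OF K inj eE e_max] by linarith
qed

lemma card_lex_family_pos:
  assumes "strong_circuit_system E C" "inj_on r E"
  shows "0 < card (lex_family r E C)"
proof -
  have "M_separated_collection E C {{}}"
    using scs_supp_nonempty[OF assms(1)]
    unfolding M_separated_collection_def M_separated_def by (auto simp: supp_def)
  then show ?thesis
    using card_separated_le_lex_family[OF assms] by fastforce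
qed

definition covers :: "'a signed_set \<Rightarrow> 'a set \<Rightarrow> bool" where
  "covers Y T \<longleftrightarrow> conforms Y T \<or> conforms (neg_sset Y) T"

lemma covers_remove: "e \<notin> supp Y \<Longrightarrow> covers Y (T - {e}) \<Longrightarrow> covers Y T"
  unfolding covers_def conforms_def supp_def by auto

lemma supp_singleton_cases:
  assumes "supp Y = {e}" "fst Y \<inter> snd Y = {}"
  shows "Y = ({e}, {}) \<or> Y = ({}, {e})"
proof -
  have "(fst Y = {e} \<and> snd Y = {}) \<or> (fst Y = {} \<and> snd Y = {e})"
    using assms unfolding supp_def Un_singleton_iff by auto
  then show ?thesis
    by (cases Y) auto
qed

lemma covers_singleton: "supp Y = {e} \<Longrightarrow> fst Y \<inter> snd Y = {} \<Longrightarrow> covers Y T"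
  using supp_singleton_cases[of Y e] unfolding covers_def conforms_def neg_sset_def
  by (cases "e \<in> T") auto

lemma covers_contract:
  assumes "covers (fst Y - {e}, snd Y - {e}) T" "e \<in> supp Y" "fst Y \<inter> snd Y = {}" "e \<notin> T"
  shows "covers Y T \<or> covers Y (insert e T)"
  using assms unfolding covers_def conforms_def supp_def by auto

lemma minimal_circuit_con:
  assumes Y: "Y \<in> C" and Y_min: "\<forall>X\<in>C. \<not> supp X \<subset> supp Y" and "e \<in> supp Y" "supp Y \<noteq> {e}"
  shows "(fst Y - {e}, snd Y - {e}) \<in> circuits_con e C"
    and "\<forall>X'\<in>circuits_con e C. \<not> supp X' \<subset> supp (fst Y - {e}, snd Y - {e})"
proof -
  show "(fst Y - {e}, snd Y - {e}) \<in> circuits_con e C"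
    using assms unfolding circuits_con_def by blast
  show "\<forall>X'\<in>circuits_con e C. \<not> supp X' \<subset> supp (fst Y - {e}, snd Y - {e})"
  proof
    fix X'
    assume "X' \<in> circuits_con e C"
    then obtain X where X: "X \<in> C" "X' = (fst X - {e}, snd X - {e})"
      unfolding circuits_con_def by blast
    have "\<not> supp X \<subset> supp Y"
      using Y_min X(1) by blast
    moreover have "supp X' = supp X - {e}"
      using X(2) unfolding supp_def by auto
    moreover have "supp (fst Y - {e}, snd Y - {e}) = supp Y - {e}"
      unfolding supp_def by auto
    ultimately show "\<not> supp X' \<subset> supp (fst Y - {e}, snd Y - {e})"
      using \<open>e \<in> supp Y\<close> by blast
  qed
qed

text \<open>The uncovered circuit \<open>Y\<close> survives, uncovered, in the deletion (if \<open>e \<notin> supp Y\<close>) or in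
  the contraction (otherwise), and there the inequality is strict by induction. Minimality of
  \<open>supp Y\<close> excludes the only way \<open>Y\<close> could disappear, namely \<open>supp Y = {e}\<close>, unless \<open>e\<close> is a
  loop, in which case \<open>S\<close> must be empty.\<close>

lemma card_separated_less_lex_family:
  assumes "strong_circuit_system E C" "inj_on r E" "M_separated_collection E C S"
    and "Y \<in> C" "\<forall>X\<in>C. \<not> supp X \<subset> supp Y" "\<forall>T\<in>S. \<not> covers Y T"
  shows "card S < card (lex_family r E C)"
  using assms
proof (induction "card E" arbitrary: E C S Y)
  case 0
  then have "E = {}"
    using scs_finite[OF "0.prems"(1)] by simp
  then show ?case
    using scs_supp_subset[OF "0.prems"(1,4)] scs_supp_nonempty[OF "0.prems"(1,4)] by blast
next
  case (Suc n)
  note K = Suc.prems(1) and inj = Suc.prems(2) and sep = Suc.prems(3)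
    and Y = Suc.prems(4) and Y_min = Suc.prems(5) and uncovered = Suc.prems(6)
  obtain e where eE: "e \<in> E" and e_max: "\<forall>y\<in>E - {e}. r y < r e"
    and n: "n = card (E - {e})" and inj': "inj_on r (E - {e})"
    using ex_max_rank_remove[OF scs_finite[OF K] Suc.hyps(2)[symmetric] inj] .
  have sep_del: "M_separated_collection (E - {e}) (circuits_del e C) (family_del e S)"
    using separated_family_del[OF sep] .
  have sep_con: "M_separated_collection (E - {e}) (circuits_con e C) (family_con e S)"
    using separated_family_con[OF sep scs_disjoint[OF K]] .
  have split_S: "card S = card (family_del e S) + card (family_con e S)"
    using card_family_split[OF separated_collection_finite[OF sep scs_finite[OF K]]] .
  note split_lex = card_lex_family_split[OF K inj eE e_max]
  have del_le: "card (family_del e S) \<le> card (lex_family r (E - {e}) (circuits_del e C))"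
    using card_separated_le_lex_family[OF strong_circuit_system_del[OF K] inj' sep_del] .
  have con_le: "card (family_con e S) \<le> card (family_con e (lex_family r E C))"
  proof (cases "({}, {e}) \<in> C")
    case True
    then show ?thesis
      using family_con_empty_if_loop[OF sep] by simp
  next
    case False
    then show ?thesis
      using card_separated_le_lex_family[OF strong_circuit_system_con[OF K] inj' sep_con]
        family_con_lex_family[OF K inj eE e_max] by simp
  qed
  show ?case
  proof (cases "e \<in> supp Y")
    case False
    have "card (family_del e S) < card (lex_family r (E - {e}) (circuits_del e C))"
    proof (rule Suc.hyps(1)[OF n strong_circuit_system_del[OF K] inj' sep_del])
      show "Y \<in> circuits_del e C" "\<forall>X\<in>circuits_del e C. \<not> supp X \<subset> supp Y"
        using Y Y_min False unfolding circuits_del_def by auto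
      show "\<forall>T\<in>family_del e S. \<not> covers Y T"
        using uncovered covers_remove[OF False] unfolding family_del_def by blast
    qed
    then show ?thesis
      using con_le split_S split_lex by linarith
  next
    case eY: True
    show ?thesis
    proof (cases "({}, {e}) \<in> C")
      case True
      then have "\<not> supp ({}, {e}) \<subset> supp Y"
        using Y_min by blast
      then have "supp Y = {e}"
        using eY by (auto simp: supp_def)
      then have "S = {}"
        using uncovered covers_singleton[OF _ scs_disjoint[OF K Y]] by blast
      then show ?thesis
        using card_lex_family_pos[OF K inj] by simp
    next
      case False
      have "supp Y \<noteq> {e}"
      proof
        assume "supp Y = {e}"
        then have "Y = neg_sset ({}, {e}) \<or> Y = ({}, {e})"
          using supp_singleton_cases scs_disjoint[OF K Y] by (simp add: neg_sset_def)
        then show False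
          using False Y scs_neg_closed[OF K, of Y] by (auto simp: neg_sset_def)
      qed
      note Y' = minimal_circuit_con[OF Y Y_min eY this]
      have "card (family_con e S) < card (lex_family r (E - {e}) (circuits_con e C))"
      proof (rule Suc.hyps(1)[OF n strong_circuit_system_con[OF K] inj' sep_con Y'])
        show "\<forall>T\<in>family_con e S. \<not> covers (fst Y - {e}, snd Y - {e}) T"
          using uncovered covers_contract[OF _ eY scs_disjoint[OF K Y]]
          unfolding family_con_def by blast
      qed
      then show ?thesis
        using del_le split_S split_lex family_con_lex_family[OF K inj eE e_max False] by simp
    qed
  qed
qed

theorem corollary7p12:
  assumes "oriented_matroid E C"
    and "max_by_size_separated E C S"
  shows "\<forall>Y\<in>C. \<exists>T\<in>S. (fst Y \<subseteq> T \<and> snd Y \<inter> T = {}) \<or> (snd Y \<subseteq> T \<and> fst Y \<inter> T = {})"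
proof
  fix Y
  assume Y: "Y \<in> C"
  have K: "strong_circuit_system E C"
    using oriented_matroid_strong_circuit_system[OF assms(1)] .
  obtain r :: "'a \<Rightarrow> nat" where inj: "inj_on r E"
    using finite_imp_inj_to_nat_seg[OF om_finite[OF assms(1)]] by blast
  have sep: "M_separated_collection E C S"
    using assms(2) unfolding max_by_size_separated_def by blast
  have "card (lex_family r E C) \<le> card S"
    using assms(2) lex_family_separated[OF scs_neg_closed[OF K], of E r]
    unfolding max_by_size_separated_def by blast
  then obtain T where "T \<in> S" "covers Y T"
    using card_separated_less_lex_family[OF K inj sep Y] om_supp_not_psubset[OF assms(1) _ Y]
    by (meson not_le)
  then show "\<exists>T\<in>S. (fst Y \<subseteq> T \<and> snd Y \<inter> T = {}) \<or> (snd Y \<subseteq> T \<and> fst Y \<inter> T = {})"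
    unfolding covers_def conforms_def by auto
qed
end
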